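(* Let $N\ge1$, $\lambda_1,\dots,\lambda_N$ distinct real numbers, $\mu_1,\dots,\mu_N$ nonzero real constants, $A=\mathrm{diag}(\lambda_1,\dots,\lambda_N)$, $B=\mathrm{diag}(\mu_1,\dots,\mu_N)$. Define functions on $\mathbb{R}^{6N}$ by \[F_1=-8(\langle P_1,BQ_1\rangle-\langle P_3,BQ_3\rangle),\] and for $m\ge2$ \[\begin{aligned}F_m=&\,4\sum_{i=1}^{m-1}\Big[(\langle A^{i-1}P_1,BQ_1\rangle-\langle A^{i-1}P_3,BQ_3\rangle)(\langle A^{m-i-1}P_1,BQ_1\rangle-\langle A^{m-i-1}P_3,BQ_3\rangle)\\ &\quad+2(\langle A^{i-1}P_1,BQ_2\rangle+\langle A^{i-1}P_2,BQ_3\rangle)(\langle A^{m-i-1}P_2,BQ_1\rangle+\langle A^{m-i-1}P_3,BQ_2\rangle)\Big]\\ &-8(\langle A^{m-1}P_1,BQ_1\rangle-\langle A^{m-1}P_3,BQ_3\rangle).\end{aligned}\] Then every $F_m$, $m\ge1$, is an integral of motion of the nonlinearized spatial system \[ \begin{pmatrix}\phi_{1j}\\ \phi_{2j}\\ \phi_{3j}\end{pmatrix}_x=U(\tilde u,\lambda_j)\begin{pmatrix}\phi_{1j}\\ \phi_{2j}\\ \phi_{3j}\end{pmatrix},\qquad \begin{pmatrix}\psi_{1j}\\ \psi_{2j}\\ \psi_{3j}\end{pmatrix}_x=-U(\tilde u,\lambda_j)^T\begin{pmatrix}\psi_{1j}\\ \psi_{2j}\\ \psi_{3j}\end{pmatrix},\quad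 j=1,\dots,N, \] with $\tilde u=(\tilde q,\tilde r)^T$, $\tilde q=\sqrt2(\langle P_1,BQ_2\rangle+\langle P_2,BQ_3\rangle)$, $\tilde r=\sqrt2(\langle P_2,BQ_1\rangle+\langle P_3,BQ_2\rangle)$. Moreover, together with $\bar F_j=\sum_{i=1}^3\phi_{ij}\psi_{ij}$, $1\le j\le N$, they form an involutive system: \[\{F_k,F_l\}=\{F_m,\bar F_j\}=0,\qquad m,k,l\ge1,\ 1\le j\le N.\]
   Context: On $\mathbb{R}^{6N}$ with coordinates $\phi_{ij},\psi_{ij}$ ($i=1,2,3$, $j=1,\dots,N$), $P_i=(\phi_{i1},\dots,\phi_{iN})^T$, $Q_i=(\psi_{i1},\dots,\psi_{iN})^T$; $\langle\cdot,\cdot\rangle$ is the standard inner product on $\mathbb{R}^N$. For $u=(q,r)^T$, $U(u,\lambda)=\begin{pmatrix}-2\lambda&\sqrt2 q&0\\ \sqrt2 r&0&\sqrt2 q\\ 0&\sqrt2 r&2\lambda\end{pmatrix}$. The Poisson bracket is $\{F,G\}=\sum_{i=1}^3\big(\langle \tfrac{\partial F}{\partial Q_i},B^{-1}\tfrac{\partial G}{\partial P_i}\rangle-\langle \tfrac{\partial F}{\partial P_i},B^{-1}\tfrac{\partial G}{\partial Q_i}\rangle\big)$ with $\frac{\partial}{\partial P_i}=(\frac{\partial}{\partial\phi_{i1}},\dots,\frac{\partial}{\partial\phi_{iN}})^T$, similarly for $Q_i$. *)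

theory Defs
  imports "HOL-Analysis.Analysis"
begin

text \<open>A point of R^(6N) is a pair (phi, psi) of coordinate families;
  phi i j and psi i j are used for i in {1,2,3}, j in {1..N}.\<close>
type_synonym point = "(nat \<Rightarrow> nat \<Rightarrow> real) \<times> (nat \<Rightarrow> nat \<Rightarrow> real)"

text \<open>ip N lam mu k a b z = < A^k P_a, B Q_b >\<close>
definition ip :: "nat \<Rightarrow> (nat \<Rightarrow> real) \<Rightarrow> (nat \<Rightarrow> real) \<Rightarrow> nat \<Rightarrow> nat \<Rightarrow> nat \<Rightarrow> point \<Rightarrow> real" where
  "ip N lam mu k a b z = (\<Sum>j=1..N. (lam j ^ k * fst z a j) * (mu j * snd z b j))"

definition Fm :: "nat \<Rightarrow> (nat \<Rightarrow> real) \<Rightarrow> (nat \<Rightarrow> real) \<Rightarrow> nat \<Rightarrow> point \<Rightarrow> real" where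
  "Fm N lam mu m z =
    (if m = 1 then -8 * (ip N lam mu 0 1 1 z - ip N lam mu 0 3 3 z)
     else 4 * (\<Sum>i=1..m-1.
            (ip N lam mu (i-1) 1 1 z - ip N lam mu (i-1) 3 3 z)
              * (ip N lam mu (m-i-1) 1 1 z - ip N lam mu (m-i-1) 3 3 z)
          + 2 * (ip N lam mu (i-1) 1 2 z + ip N lam mu (i-1) 2 3 z)
              * (ip N lam mu (m-i-1) 2 1 z + ip N lam mu (m-i-1) 3 2 z))
        - 8 * (ip N lam mu (m-1) 1 1 z - ip N lam mu (m-1) 3 3 z))"

definition Fbar :: "nat \<Rightarrow> point \<Rightarrow> real" where
  "Fbar j z = (\<Sum>i=1..3. fst z i j * snd z i j)"

definition Umat :: "real \<Rightarrow> real \<Rightarrow> real \<Rightarrow> nat \<Rightarrow> nat \<Rightarrow> real" where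
  "Umat q r l i k =
    (if i = 1 \<and> k = 1 then -2 * l
     else if i = 1 \<and> k = 2 then sqrt 2 * q
     else if i = 2 \<and> k = 1 then sqrt 2 * r
     else if i = 2 \<and> k = 3 then sqrt 2 * q
     else if i = 3 \<and> k = 2 then sqrt 2 * r
     else if i = 3 \<and> k = 3 then 2 * l
     else 0)"

definition qt :: "nat \<Rightarrow> (nat \<Rightarrow> real) \<Rightarrow> (nat \<Rightarrow> real) \<Rightarrow> point \<Rightarrow> real" where
  "qt N lam mu z = sqrt 2 * (ip N lam mu 0 1 2 z + ip N lam mu 0 2 3 z)"

definition rt :: "nat \<Rightarrow> (nat \<Rightarrow> real) \<Rightarrow> (nat \<Rightarrow> real) \<Rightarrow> point \<Rightarrow> real" where
  "rt N lam mu z = sqrt 2 * (ip N lam mu 0 2 1 z + ip N lam mu 0 3 2 z)"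

definition is_solution ::
  "nat \<Rightarrow> (nat \<Rightarrow> real) \<Rightarrow> (nat \<Rightarrow> real) \<Rightarrow> real \<Rightarrow> real \<Rightarrow> (real \<Rightarrow> point) \<Rightarrow> bool" where
  "is_solution N lam mu a b Z \<longleftrightarrow>
    (\<forall>x \<in> {a<..<b}. \<forall>i \<in> {1..3}. \<forall>j \<in> {1..N}.
       ((\<lambda>y. fst (Z y) i j) has_real_derivative
          (\<Sum>k=1..3. Umat (qt N lam mu (Z x)) (rt N lam mu (Z x)) (lam j) i k * fst (Z x) k j)) (at x)
     \<and> ((\<lambda>y. snd (Z y) i j) has_real_derivative
          - (\<Sum>k=1..3. Umat (qt N lam mu (Z x)) (rt N lam mu (Z x)) (lam j) k i * snd (Z x) k j)) (at x))"

definition pd_phi :: "(point \<Rightarrow> real) \<Rightarrow> point \<Rightarrow> nat \<Rightarrow> nat \<Rightarrow> real" where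
  "pd_phi F z i j = deriv (\<lambda>t. F ((\<lambda>a c. if a = i \<and> c = j then fst z a c + t else fst z a c), snd z)) 0"

definition pd_psi :: "(point \<Rightarrow> real) \<Rightarrow> point \<Rightarrow> nat \<Rightarrow> nat \<Rightarrow> real" where
  "pd_psi F z i j = deriv (\<lambda>t. F (fst z, (\<lambda>a c. if a = i \<and> c = j then snd z a c + t else snd z a c))) 0"

text \<open>Poisson bracket with B^{-1} = diag(1/mu_1, ..., 1/mu_N).\<close>
definition pbracket :: "nat \<Rightarrow> (nat \<Rightarrow> real) \<Rightarrow> (point \<Rightarrow> real) \<Rightarrow> (point \<Rightarrow> real) \<Rightarrow> point \<Rightarrow> real" where
  "pbracket N mu F G z =
    (\<Sum>i=1..3. \<Sum>j=1..N.
       pd_psi F z i j * (pd_phi G z i j / mu j) - pd_phi F z i j * (pd_psi G z i j / mu j))"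

end

theory Submission
  imports Defs
begin

(*
  Put A_n = <A^n P_1, B Q_1> - <A^n P_3, B Q_3>, B_n = <A^n P_1, B Q_2> + <A^n P_2, B Q_3>,
  C_n = <A^n P_2, B Q_1> + <A^n P_3, B Q_2> (without index, A and B are the diagonal matrices)
  and form the series a = -1 + sum A_n lambda^-(n+1), b = sum B_n lambda^-(n+1) and
  c = sum C_n lambda^-(n+1). Then F_m is 4 times the coefficient of lambda^-m in a^2 + 2 b c.

  The moments are sums over the sites j of lambda_j^n mu_j times three quadratic densities,
  which close under the Poisson bracket like an sl(2) triple. Hence {F_k, F_l} is a sum, over
  u < k and v < l, of the determinants of the coefficient vectors (a_i, b_i, c_i), i = u, v, w,
  with u + v + w = k + l - 1; such a sum of an alternating function cancels in pairs. Along the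
  spatial system the moments evolve as under the Hamiltonian flow of a multiple of
  F_2 - F_1^2/16, so the same cancellation makes every F_m constant. Finally Fbar_j generates
  the rescaling (phi_j, psi_j) -> (e^t phi_j, e^-t psi_j), which leaves every density invariant.
*)

section \<open>Sums over antidiagonals\<close>

lemma sum_reflect_antisym:
  fixes g :: "nat \<Rightarrow> nat \<Rightarrow> 'a::linordered_ab_group_add"
  assumes "\<And>x y. g x y = - g y x"
  shows "(\<Sum>v\<in>{a..<b}. g v (a + b - 1 - v)) = 0"
proof -
  have "(\<Sum>v\<in>{a..<b}. g v (a + b - 1 - v)) = (\<Sum>v\<in>{a..<b}. g (a + b - 1 - v) v)"
    by (rule sum.reindex_bij_witness[of _ "\<lambda>v. a + b - 1 - v" "\<lambda>v. a + b - 1 - v"]) auto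
  also have "\<dots> = (\<Sum>v\<in>{a..<b}. - g v (a + b - 1 - v))"
    by (intro sum.cong refl) (rule assms)
  also have "\<dots> = - (\<Sum>v\<in>{a..<b}. g v (a + b - 1 - v))"
    by (rule sum_negf)
  finally show ?thesis
    by simp
qed

lemma sum_triangle_antisym:
  fixes f :: "nat \<Rightarrow> nat \<Rightarrow> 'a::linordered_ab_group_add"
  assumes "\<And>x y. f x y = - f y x"
  shows "(\<Sum>u<k. \<Sum>v<k - u. f u v) = 0"
proof -
  have triangle: "Sigma {..<k} (\<lambda>u. {..<k - u}) = {(u, v). u + v < k}"
    by auto
  have "(\<Sum>(u, v)\<in>{(u, v). u + v < k}. f u v) = (\<Sum>(u, v)\<in>{(u, v). u + v < k}. f v u)"
    by (rule sum.reindex_bij_witness[of _ prod.swap prod.swap]) auto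
  also have "\<dots> = (\<Sum>(u, v)\<in>{(u, v). u + v < k}. - f u v)"
    by (intro sum.cong refl) (auto intro: assms)
  also have "\<dots> = - (\<Sum>(u, v)\<in>{(u, v). u + v < k}. f u v)"
    by (simp add: case_prod_unfold sum_negf)
  finally show ?thesis
    by (simp add: sum.Sigma flip: triangle)
qed

lemma sum_antidiagonal_alternating:
  fixes D :: "nat \<Rightarrow> nat \<Rightarrow> nat \<Rightarrow> 'a::linordered_ab_group_add"
  assumes swap12: "\<And>u v w. D v u w = - D u v w"
    and swap23: "\<And>u v w. D u w v = - D u v w"
  shows "(\<Sum>u<k. \<Sum>v<l. D u v (k + l - 1 - u - v)) = 0"
proof -
  have le: "(\<Sum>u<k. \<Sum>v<l. D u v (k + l - 1 - u - v)) = 0" if "k \<le> l" for k l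
  proof -
    have "(\<Sum>v<l. D u v (k + l - 1 - u - v)) = (\<Sum>v<k - u. D u v (k + l - 1 - u - v))"
      if "u < k" for u
    proof -
      have "(\<Sum>v\<in>{k - u..<l}. D u v (k + l - 1 - u - v))
          = (\<Sum>v\<in>{k - u..<l}. D u v (k - u + l - 1 - v))"
        using \<open>u < k\<close> by (intro sum.cong) auto
      also have "\<dots> = 0"
        by (rule sum_reflect_antisym) (rule swap23)
      finally have "(\<Sum>v\<in>{k - u..<l}. D u v (k + l - 1 - u - v)) = 0" .
      moreover have "(\<Sum>v<l. D u v (k + l - 1 - u - v))
          = (\<Sum>v<k - u. D u v (k + l - 1 - u - v)) + (\<Sum>v\<in>{k - u..<l}. D u v (k + l - 1 - u - v))"
        using \<open>k \<le> l\<close> by (simp add: lessThan_atLeast0 sum.atLeastLessThan_concat)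
      ultimately show ?thesis
        by simp
    qed
    then have "(\<Sum>u<k. \<Sum>v<l. D u v (k + l - 1 - u - v))
        = (\<Sum>u<k. \<Sum>v<k - u. D u v (k + l - 1 - u - v))"
      by simp
    also have "\<dots> = 0"
      by (rule sum_triangle_antisym) (metis swap12 diff_commute)
    finally show ?thesis .
  qed
  show ?thesis
  proof (cases "k \<le> l")
    case True
    then show ?thesis by (rule le)
  next
    case False
    have "(\<Sum>u<k. \<Sum>v<l. D u v (k + l - 1 - u - v))
        = (\<Sum>v<l. \<Sum>u<k. D u v (l + k - 1 - v - u))"
      by (subst sum.swap) (simp add: add.commute diff_commute)
    also have "\<dots> = - (\<Sum>v<l. \<Sum>u<k. D v u (l + k - 1 - v - u))"
      by (simp only: sum_negf[symmetric]) (intro sum.cong refl, rule swap12)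
    finally have "(\<Sum>u<k. \<Sum>v<l. D u v (k + l - 1 - u - v))
        = - (\<Sum>v<l. \<Sum>u<k. D v u (l + k - 1 - v - u))" .
    with le[of l k] False show ?thesis
      by simp
  qed
qed

lemma sum_reindex_antidiagonal:
  "(\<Sum>p<k. \<Sum>q<l. D (k - Suc p) (l - Suc q) (Suc (p + q)))
    = (\<Sum>u<k. \<Sum>v<l. D u v (k + l - 1 - u - v))"
proof -
  have "(\<Sum>p<k. \<Sum>q<l. D (k - Suc p) (l - Suc q) (Suc (p + q)))
      = (\<Sum>u<k. \<Sum>q<l. D (k - Suc (k - Suc u)) (l - Suc q) (Suc (k - Suc u + q)))"
    by (rule sum.nat_diff_reindex[symmetric])
  also have "\<dots> = (\<Sum>u<k. \<Sum>v<l. D u v (k + l - 1 - u - v))"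
  proof (rule sum.cong[OF refl])
    fix u
    assume "u \<in> {..<k}"
    then have "(\<Sum>q<l. D (k - Suc (k - Suc u)) (l - Suc q) (Suc (k - Suc u + q)))
        = (\<Sum>q<l. D u (l - Suc q) (k + l - 1 - u - (l - Suc q)))"
      by (intro sum.cong) (auto simp: Suc_diff_Suc)
    also have "\<dots> = (\<Sum>v<l. D u v (k + l - 1 - u - v))"
      by (rule sum.nat_diff_reindex)
    finally show "(\<Sum>q<l. D (k - Suc (k - Suc u)) (l - Suc q) (Suc (k - Suc u + q)))
        = (\<Sum>v<l. D u v (k + l - 1 - u - v))" .
  qed
  finally show ?thesis .
qed

lemma sum_convolution_reflect:
  fixes f g :: "nat \<Rightarrow> 'a::semiring_0"
  shows "(\<Sum>i\<le>m. f (m - i) * g i) = (\<Sum>i\<le>m. f i * g (m - i))"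
  by (rule sum.reindex_bij_witness[of _ "\<lambda>i. m - i" "\<lambda>i. m - i"]) (simp_all add: atMost_iff)

lemma sum_convolution_case_nat_0:
  fixes f g :: "nat \<Rightarrow> 'a::semiring_0"
  shows "(\<Sum>i\<le>m. case_nat 0 f i * g (m - i)) = (\<Sum>p<m. f p * g (m - Suc p))"
  by (simp add: sum.atMost_shift)

lemma sum_convolution_case_nat:
  fixes f g :: "nat \<Rightarrow> 'a::semiring_0"
  shows "(\<Sum>i\<le>Suc n. case_nat c f i * case_nat d g (Suc n - i))
    = c * g n + f n * d + (\<Sum>p<n. f p * g (n - Suc p))"
proof -
  have "(\<Sum>p<n. f p * case_nat d g (n - p)) = (\<Sum>p<n. f p * g (n - Suc p))"
    by (intro sum.cong) (auto simp: Suc_diff_Suc[symmetric])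
  then show ?thesis
    by (simp add: sum.atMost_shift add.assoc add.commute)
qed

lemma sum_poly_mult:
  fixes f g w :: "nat \<Rightarrow> 'a::comm_semiring_1"
  shows "(\<Sum>j\<in>J. (\<Sum>p<k. f p * t j ^ p) * (\<Sum>q<l. g q * t j ^ q) * w j)
    = (\<Sum>p<k. \<Sum>q<l. f p * g q * (\<Sum>j\<in>J. t j ^ (p + q) * w j))"
proof -
  have "(\<Sum>j\<in>J. (\<Sum>p<k. f p * t j ^ p) * (\<Sum>q<l. g q * t j ^ q) * w j)
      = (\<Sum>j\<in>J. \<Sum>p<k. \<Sum>q<l. f p * g q * (t j ^ (p + q) * w j))"
    unfolding sum_product unfolding sum_distrib_right by (simp add: power_add mult_ac)
  also have "\<dots> = (\<Sum>p<k. \<Sum>q<l. \<Sum>j\<in>J. f p * g q * (t j ^ (p + q) * w j))"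
    by (subst sum.swap) (simp add: sum.swap[of _ J])
  finally show ?thesis
    by (simp add: sum_distrib_left)
qed

lemma sum_1_to_3: "(\<Sum>i=1..3. f i) = f 1 + f 2 + f (3::nat)"
  by (simp add: numeral_3_eq_3 numeral_2_eq_2 atLeastAtMostSuc_conv ac_simps)

section \<open>Polynomials in the moments\<close>

definition det3 :: "(nat \<Rightarrow> 'a::comm_ring) \<Rightarrow> (nat \<Rightarrow> 'a) \<Rightarrow> (nat \<Rightarrow> 'a)
    \<Rightarrow> nat \<Rightarrow> nat \<Rightarrow> nat \<Rightarrow> 'a" where
  "det3 a b c u v w =
     a u * (b v * c w - b w * c v) - a v * (b u * c w - b w * c u) + a w * (b u * c v - b v * c u)"

definition moment_bracket :: "(nat \<Rightarrow> real) \<Rightarrow> (nat \<Rightarrow> real) \<Rightarrow> (nat \<Rightarrow> real)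
    \<Rightarrow> nat \<Rightarrow> nat \<Rightarrow> real" where
  "moment_bracket A B C k l =
     (\<Sum>u<k. \<Sum>v<l. det3 (case_nat (-1) A) (case_nat 0 B) (case_nat 0 C) u v (k + l - 1 - u - v))"

lemma moment_bracket_eq_0: "moment_bracket A B C k l = 0"
  unfolding moment_bracket_def
  by (rule sum_antidiagonal_alternating) (simp_all add: det3_def algebra_simps)

text \<open>\<^term>\<open>case_nat (-1) A\<close>, \<^term>\<open>case_nat 0 B\<close> and \<^term>\<open>case_nat 0 C\<close>
  are the coefficient sequences of the series a, b, c.\<close>

definition Fpoly :: "nat \<Rightarrow> (nat \<Rightarrow> real) \<Rightarrow> (nat \<Rightarrow> real) \<Rightarrow> (nat \<Rightarrow> real) \<Rightarrow> real" where
  "Fpoly m A B C = 4 * (\<Sum>i\<le>m. case_nat (-1) A i * case_nat (-1) A (m - i)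
                              + 2 * (case_nat 0 B i * case_nat 0 C (m - i)))"

definition Fpoly_deriv :: "nat \<Rightarrow> (nat \<Rightarrow> real) \<Rightarrow> (nat \<Rightarrow> real) \<Rightarrow> (nat \<Rightarrow> real)
    \<Rightarrow> (nat \<Rightarrow> real) \<Rightarrow> (nat \<Rightarrow> real) \<Rightarrow> (nat \<Rightarrow> real) \<Rightarrow> real" where
  "Fpoly_deriv m A B C dA dB dC = 8 * (\<Sum>p<m. case_nat (-1) A (m - Suc p) * dA p
      + case_nat 0 C (m - Suc p) * dB p + case_nat 0 B (m - Suc p) * dC p)"

lemma Fpoly_Suc:
  "Fpoly (Suc n) A B C = 4 * (\<Sum>p<n. A p * A (n - Suc p) + 2 * (B p * C (n - Suc p))) - 8 * A n"
  unfolding Fpoly_def sum.distrib sum_distrib_left[symmetric] sum_convolution_case_nat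
  by simp

lemma has_real_derivative_case_nat:
  assumes "\<And>n. ((\<lambda>y. A y n) has_real_derivative dA n) (at x)"
  shows "((\<lambda>y. case_nat c (A y) i) has_real_derivative case_nat 0 dA i) (at x)"
  using assms by (cases i) auto

lemma Fpoly_has_real_derivative:
  assumes "\<And>n. ((\<lambda>y. A y n) has_real_derivative dA n) (at x)"
    and "\<And>n. ((\<lambda>y. B y n) has_real_derivative dB n) (at x)"
    and "\<And>n. ((\<lambda>y. C y n) has_real_derivative dC n) (at x)"
  shows "((\<lambda>y. Fpoly m (A y) (B y) (C y)) has_real_derivative
            Fpoly_deriv m (A x) (B x) (C x) dA dB dC) (at x)"
proof -
  define a b c da db dc where "a = case_nat (-1) (A x)" and "b = case_nat 0 (B x)"
    and "c = case_nat 0 (C x)" and "da = case_nat 0 dA" and "db = case_nat 0 dB"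
    and "dc = case_nat 0 dC"
  have "((\<lambda>y. Fpoly m (A y) (B y) (C y)) has_real_derivative
      4 * (\<Sum>i\<le>m. da i * a (m - i) + da (m - i) * a i
        + 2 * (db i * c (m - i) + dc (m - i) * b i))) (at x)"
    unfolding Fpoly_def a_def b_def c_def da_def db_def dc_def
    by (intro DERIV_cmult DERIV_sum DERIV_add DERIV_mult has_real_derivative_case_nat assms)
  also have "4 * (\<Sum>i\<le>m. da i * a (m - i) + da (m - i) * a i
        + 2 * (db i * c (m - i) + dc (m - i) * b i))
      = 8 * (\<Sum>i\<le>m. da i * a (m - i) + db i * c (m - i) + dc i * b (m - i))"
    by (simp add: sum.distrib sum_distrib_left[symmetric] sum_convolution_reflect)
  also have "\<dots> = Fpoly_deriv m (A x) (B x) (C x) dA dB dC"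
    unfolding Fpoly_deriv_def a_def b_def c_def da_def db_def dc_def sum.distrib
      sum_convolution_case_nat_0 by (simp add: mult.commute)
  finally show ?thesis .
qed

lemma Fpoly_deriv_flow:
  "Fpoly_deriv m A B C (\<lambda>n. 2 * B 0 * C n - 2 * C 0 * B n) (\<lambda>n. - 2 * B (Suc n) - 2 * B 0 * A n)
      (\<lambda>n. 2 * C (Suc n) + 2 * C 0 * A n)
    = 16 * (moment_bracket A B C m 2 + A 0 * moment_bracket A B C m 1)"
proof -
  define a b c where "a = case_nat (-1) A" and "b = case_nat 0 B" and "c = case_nat 0 C"
  have "Fpoly_deriv m A B C (\<lambda>n. 2 * B 0 * C n - 2 * C 0 * B n)
      (\<lambda>n. - 2 * B (Suc n) - 2 * B 0 * A n) (\<lambda>n. 2 * C (Suc n) + 2 * C 0 * A n)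
    = 16 * (\<Sum>p<m. det3 a b c (m - Suc p) 0 (Suc (Suc p)) + det3 a b c (m - Suc p) 1 (Suc p)
        + A 0 * det3 a b c (m - Suc p) 0 (Suc p))"
    unfolding Fpoly_deriv_def sum_distrib_left
    by (intro sum.cong) (simp_all add: det3_def a_def b_def c_def algebra_simps)
  also have "\<dots> = 16 * (\<Sum>u<m. det3 a b c u 0 (Suc m - u) + det3 a b c u 1 (m - u)
      + A 0 * det3 a b c u 0 (m - u))"
    by (subst (2) sum.nat_diff_reindex[symmetric]) (intro arg_cong[where f = "(*) 16"] sum.cong;
        simp add: Suc_diff_Suc)
  also have "\<dots> = 16 * (moment_bracket A B C m 2 + A 0 * moment_bracket A B C m 1)"
    by (simp add: moment_bracket_def numeral_2_eq_2 sum.distrib sum_distrib_left a_def b_def c_def)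
  finally show ?thesis .
qed

section \<open>Moments and partial derivatives\<close>

definition densA :: "point \<Rightarrow> nat \<Rightarrow> real" where
  "densA z j = fst z 1 j * snd z 1 j - fst z 3 j * snd z 3 j"

definition densB :: "point \<Rightarrow> nat \<Rightarrow> real" where
  "densB z j = fst z 1 j * snd z 2 j + fst z 2 j * snd z 3 j"

definition densC :: "point \<Rightarrow> nat \<Rightarrow> real" where
  "densC z j = fst z 2 j * snd z 1 j + fst z 3 j * snd z 2 j"

definition moment :: "nat \<Rightarrow> (nat \<Rightarrow> real) \<Rightarrow> (nat \<Rightarrow> real) \<Rightarrow> (point \<Rightarrow> nat \<Rightarrow> real)
    \<Rightarrow> point \<Rightarrow> nat \<Rightarrow> real" where
  "moment N lam mu e z n = (\<Sum>j=1..N. lam j ^ n * (mu j * e z j))"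

lemma moment_densA: "moment N lam mu densA z = (\<lambda>n. ip N lam mu n 1 1 z - ip N lam mu n 3 3 z)"
  unfolding moment_def densA_def ip_def by (simp add: fun_eq_iff sum_subtractf[symmetric] algebra_simps)

lemma moment_densB: "moment N lam mu densB z = (\<lambda>n. ip N lam mu n 1 2 z + ip N lam mu n 2 3 z)"
  unfolding moment_def densB_def ip_def by (simp add: fun_eq_iff sum.distrib[symmetric] algebra_simps)

lemma moment_densC: "moment N lam mu densC z = (\<lambda>n. ip N lam mu n 2 1 z + ip N lam mu n 3 2 z)"
  unfolding moment_def densC_def ip_def by (simp add: fun_eq_iff sum.distrib[symmetric] algebra_simps)

lemma Fm_eq_Fpoly:
  assumes "1 \<le> m"
  shows "Fm N lam mu m z
    = Fpoly m (moment N lam mu densA z) (moment N lam mu densB z) (moment N lam mu densC z)"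
proof -
  obtain n where "m = Suc n"
    using assms by (cases m) auto
  then show ?thesis
    by (simp add: Fm_def Fpoly_Suc moment_densA moment_densB moment_densC sum.atLeast1_atMost_eq
        algebra_simps)
qed

definition upd_phi :: "point \<Rightarrow> nat \<Rightarrow> nat \<Rightarrow> real \<Rightarrow> point" where
  "upd_phi z i j t = ((\<lambda>a c. if a = i \<and> c = j then fst z a c + t else fst z a c), snd z)"

definition upd_psi :: "point \<Rightarrow> nat \<Rightarrow> nat \<Rightarrow> real \<Rightarrow> point" where
  "upd_psi z i j t = (fst z, (\<lambda>a c. if a = i \<and> c = j then snd z a c + t else snd z a c))"

lemma pd_phi_upd_phi: "pd_phi F z i j = deriv (\<lambda>t. F (upd_phi z i j t)) 0"
  unfolding pd_phi_def upd_phi_def ..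

lemma pd_psi_upd_psi: "pd_psi F z i j = deriv (\<lambda>t. F (upd_psi z i j t)) 0"
  unfolding pd_psi_def upd_psi_def ..

definition prod_dphi :: "point \<Rightarrow> nat \<Rightarrow> nat \<Rightarrow> nat \<Rightarrow> nat \<Rightarrow> real" where
  "prod_dphi z i j a b = (if a = i then snd z b j else 0)"

definition prod_dpsi :: "point \<Rightarrow> nat \<Rightarrow> nat \<Rightarrow> nat \<Rightarrow> nat \<Rightarrow> real" where
  "prod_dpsi z i j a b = (if b = i then fst z a j else 0)"

lemma ip_upd_phi:
  assumes "j \<in> {1..N}"
  shows "ip N lam mu k a b (upd_phi z i j t)
    = ip N lam mu k a b z + t * (lam j ^ k * mu j * prod_dphi z i j a b)"
proof -
  have "ip N lam mu k a b (upd_phi z i j t) = (\<Sum>c=1..N. lam c ^ k * fst z a c * (mu c * snd z b c)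
      + (if c = j then t * (lam j ^ k * mu j * prod_dphi z i j a b) else 0))"
    unfolding ip_def upd_phi_def prod_dphi_def by (intro sum.cong) (auto simp: algebra_simps)
  with assms show ?thesis
    by (simp add: sum.distrib ip_def)
qed

lemma ip_upd_psi:
  assumes "j \<in> {1..N}"
  shows "ip N lam mu k a b (upd_psi z i j t)
    = ip N lam mu k a b z + t * (lam j ^ k * mu j * prod_dpsi z i j a b)"
proof -
  have "ip N lam mu k a b (upd_psi z i j t) = (\<Sum>c=1..N. lam c ^ k * fst z a c * (mu c * snd z b c)
      + (if c = j then t * (lam j ^ k * mu j * prod_dpsi z i j a b) else 0))"
    unfolding ip_def upd_psi_def prod_dpsi_def by (intro sum.cong) (auto simp: algebra_simps)
  with assms show ?thesis
    by (simp add: sum.distrib ip_def)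
qed

definition grad_poly :: "nat \<Rightarrow> (nat \<Rightarrow> real) \<Rightarrow> real \<Rightarrow> real" where
  "grad_poly m a t = (\<Sum>p<m. 8 * a (m - Suc p) * t ^ p)"

text \<open>The derivative of w (\<alpha> densA + \<beta> densB + \<gamma> densC) at one site, when the products
  phi_a psi_b there have derivatives d a b.\<close>

definition dens_deriv :: "real \<Rightarrow> real \<Rightarrow> real \<Rightarrow> real \<Rightarrow> (nat \<Rightarrow> nat \<Rightarrow> real) \<Rightarrow> real" where
  "dens_deriv w \<alpha> \<beta> \<gamma> d = w * (\<alpha> * (d 1 1 - d 3 3) + \<beta> * (d 1 2 + d 2 3) + \<gamma> * (d 2 1 + d 3 2))"

lemma deriv_Fm_affine_curve:
  fixes N :: nat and lam mu :: "nat \<Rightarrow> real" and z :: point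
  assumes "1 \<le> m"
    and affine: "\<And>k a b t.
      ip N lam mu k a b (w t) = ip N lam mu k a b z + t * (lam j ^ k * mu j * d a b)"
  defines "A \<equiv> moment N lam mu densA z" and "B \<equiv> moment N lam mu densB z"
    and "C \<equiv> moment N lam mu densC z"
  shows "deriv (\<lambda>t. Fm N lam mu m (w t)) 0 = dens_deriv (mu j)
    (grad_poly m (case_nat (-1) A) (lam j)) (grad_poly m (case_nat 0 C) (lam j))
    (grad_poly m (case_nat 0 B) (lam j)) d"
proof -
  define dA dB dC where "dA n = lam j ^ n * mu j * (d 1 1 - d 3 3)"
    and "dB n = lam j ^ n * mu j * (d 1 2 + d 2 3)" and "dC n = lam j ^ n * mu j * (d 2 1 + d 3 2)"
    for n
  have "(\<lambda>t. Fm N lam mu m (w t))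
      = (\<lambda>t. Fpoly m (\<lambda>n. A n + t * dA n) (\<lambda>n. B n + t * dB n) (\<lambda>n. C n + t * dC n))"
    by (simp add: Fm_eq_Fpoly[OF \<open>1 \<le> m\<close>] A_def B_def C_def dA_def dB_def dC_def
        moment_densA moment_densB moment_densC affine algebra_simps)
  moreover have "((\<lambda>t. A n + t * dA n) has_real_derivative dA n) (at 0)"
    and "((\<lambda>t. B n + t * dB n) has_real_derivative dB n) (at 0)"
    and "((\<lambda>t. C n + t * dC n) has_real_derivative dC n) (at 0)" for n
    by (auto intro!: derivative_eq_intros)
  from Fpoly_has_real_derivative[OF this, of m]
  have "((\<lambda>t. Fpoly m (\<lambda>n. A n + t * dA n) (\<lambda>n. B n + t * dB n) (\<lambda>n. C n + t * dC n))
      has_real_derivative Fpoly_deriv m A B C dA dB dC) (at 0)"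
    by simp
  ultimately have "deriv (\<lambda>t. Fm N lam mu m (w t)) 0 = Fpoly_deriv m A B C dA dB dC"
    by (simp add: DERIV_imp_deriv)
  also have "\<dots> = (\<Sum>p<m. mu j * (8 * case_nat (-1) A (m - Suc p) * lam j ^ p * (d 1 1 - d 3 3)
      + 8 * case_nat 0 C (m - Suc p) * lam j ^ p * (d 1 2 + d 2 3)
      + 8 * case_nat 0 B (m - Suc p) * lam j ^ p * (d 2 1 + d 3 2)))"
    unfolding Fpoly_deriv_def dA_def dB_def dC_def sum_distrib_left
    by (intro sum.cong) (simp_all add: algebra_simps)
  also have "\<dots> = dens_deriv (mu j) (grad_poly m (case_nat (-1) A) (lam j))
      (grad_poly m (case_nat 0 C) (lam j)) (grad_poly m (case_nat 0 B) (lam j)) d"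
    unfolding dens_deriv_def grad_poly_def
    by (simp add: distrib_left sum_distrib_left sum_distrib_right sum.distrib)
  finally show ?thesis .
qed

lemma pd_phi_Fm:
  fixes N :: nat and lam mu :: "nat \<Rightarrow> real" and z :: point
  assumes "1 \<le> m" and "j \<in> {1..N}"
  defines "A \<equiv> moment N lam mu densA z" and "B \<equiv> moment N lam mu densB z"
    and "C \<equiv> moment N lam mu densC z"
  shows "pd_phi (Fm N lam mu m) z i j = dens_deriv (mu j)
    (grad_poly m (case_nat (-1) A) (lam j)) (grad_poly m (case_nat 0 C) (lam j))
    (grad_poly m (case_nat 0 B) (lam j)) (prod_dphi z i j)"
  unfolding pd_phi_upd_phi A_def B_def C_def
  using assms(1) by (rule deriv_Fm_affine_curve) (rule ip_upd_phi[OF assms(2)])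

lemma pd_psi_Fm:
  fixes N :: nat and lam mu :: "nat \<Rightarrow> real" and z :: point
  assumes "1 \<le> m" and "j \<in> {1..N}"
  defines "A \<equiv> moment N lam mu densA z" and "B \<equiv> moment N lam mu densB z"
    and "C \<equiv> moment N lam mu densC z"
  shows "pd_psi (Fm N lam mu m) z i j = dens_deriv (mu j)
    (grad_poly m (case_nat (-1) A) (lam j)) (grad_poly m (case_nat 0 C) (lam j))
    (grad_poly m (case_nat 0 B) (lam j)) (prod_dpsi z i j)"
  unfolding pd_psi_upd_psi A_def B_def C_def
  using assms(1) by (rule deriv_Fm_affine_curve) (rule ip_upd_psi[OF assms(2)])

lemma Fbar_upd_phi:
  assumes "i \<in> {1..3}"
  shows "Fbar j' (upd_phi z i j t) = Fbar j' z + t * (if j = j' then snd z i j else 0)"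
proof -
  have "Fbar j' (upd_phi z i j t) = (\<Sum>a=1..3. fst z a j' * snd z a j'
      + (if a = i then if j = j' then t * snd z i j else 0 else 0))"
    unfolding Fbar_def upd_phi_def by (intro sum.cong) (auto simp: algebra_simps)
  with assms show ?thesis
    by (simp add: sum.distrib Fbar_def)
qed

lemma Fbar_upd_psi:
  assumes "i \<in> {1..3}"
  shows "Fbar j' (upd_psi z i j t) = Fbar j' z + t * (if j = j' then fst z i j else 0)"
proof -
  have "Fbar j' (upd_psi z i j t) = (\<Sum>a=1..3. fst z a j' * snd z a j'
      + (if a = i then if j = j' then t * fst z i j else 0 else 0))"
    unfolding Fbar_def upd_psi_def by (intro sum.cong) (auto simp: algebra_simps)
  with assms show ?thesis
    by (simp add: sum.distrib Fbar_def)
qed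

lemma deriv_affine: "deriv (\<lambda>t. c + t * d) 0 = (d :: real)"
  by (rule DERIV_imp_deriv) (auto intro!: derivative_eq_intros)

lemma pd_phi_Fbar: "i \<in> {1..3} \<Longrightarrow> pd_phi (Fbar j') z i j = (if j = j' then snd z i j else 0)"
  unfolding pd_phi_upd_phi Fbar_upd_phi by (rule deriv_affine)

lemma pd_psi_Fbar: "i \<in> {1..3} \<Longrightarrow> pd_psi (Fbar j') z i j = (if j = j' then fst z i j else 0)"
  unfolding pd_psi_upd_psi Fbar_upd_psi by (rule deriv_affine)

section \<open>Poisson brackets\<close>

lemma dens_deriv_bracket:
  "(\<Sum>i=1..3. dens_deriv w \<alpha> \<beta> \<gamma> (prod_dpsi z i j) * (dens_deriv w \<alpha>' \<beta>' \<gamma>' (prod_dphi z i j) / w)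
      - dens_deriv w \<alpha> \<beta> \<gamma> (prod_dphi z i j) * (dens_deriv w \<alpha>' \<beta>' \<gamma>' (prod_dpsi z i j) / w))
    = (\<alpha> * \<beta>' - \<beta> * \<alpha>') * (w * densB z j) - (\<alpha> * \<gamma>' - \<gamma> * \<alpha>') * (w * densC z j)
      + (\<beta> * \<gamma>' - \<gamma> * \<beta>') * (w * densA z j)"
  unfolding sum_1_to_3
  by (cases "w = 0") (simp_all add: dens_deriv_def prod_dphi_def prod_dpsi_def
      densA_def densB_def densC_def field_simps)

lemma dens_deriv_bracket_euler:
  "(\<Sum>i=1..3. dens_deriv w \<alpha> \<beta> \<gamma> (prod_dpsi z i j) * (snd z i j / w)
      - dens_deriv w \<alpha> \<beta> \<gamma> (prod_dphi z i j) * (fst z i j / w)) = 0"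
  unfolding sum_1_to_3
  by (cases "w = 0") (simp_all add: dens_deriv_def prod_dphi_def prod_dpsi_def algebra_simps)

lemma pbracket_Fm_Fm:
  fixes N :: nat and lam mu :: "nat \<Rightarrow> real" and z :: point
  assumes "1 \<le> k" and "1 \<le> l"
  defines "A \<equiv> moment N lam mu densA z" and "B \<equiv> moment N lam mu densB z"
    and "C \<equiv> moment N lam mu densC z"
  shows "pbracket N mu (Fm N lam mu k) (Fm N lam mu l) z = - 64 * moment_bracket A B C k l"
proof -
  define a b c where "a = case_nat (-1) A" and "b = case_nat 0 B" and "c = case_nat 0 C"
  define G where "G m e j = grad_poly m e (lam j)" for m e j
  have site: "(\<Sum>i=1..3. pd_psi (Fm N lam mu k) z i j * (pd_phi (Fm N lam mu l) z i j / mu j)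
      - pd_phi (Fm N lam mu k) z i j * (pd_psi (Fm N lam mu l) z i j / mu j))
    = (G k a j * G l c j - G k c j * G l a j) * (mu j * densB z j)
      - (G k a j * G l b j - G k b j * G l a j) * (mu j * densC z j)
      + (G k c j * G l b j - G k b j * G l c j) * (mu j * densA z j)" if "j \<in> {1..N}" for j
    unfolding pd_phi_Fm[OF assms(1) that] pd_psi_Fm[OF assms(1) that]
      pd_phi_Fm[OF assms(2) that] pd_psi_Fm[OF assms(2) that]
    unfolding G_def a_def b_def c_def A_def B_def C_def
    by (rule dens_deriv_bracket)
  have "pbracket N mu (Fm N lam mu k) (Fm N lam mu l) z
      = (\<Sum>j=1..N. (G k a j * G l c j - G k c j * G l a j) * (mu j * densB z j)
          - (G k a j * G l b j - G k b j * G l a j) * (mu j * densC z j)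
          + (G k c j * G l b j - G k b j * G l c j) * (mu j * densA z j))"
    unfolding pbracket_def by (subst sum.swap) (rule sum.cong[OF refl site])
  also have "\<dots> = (\<Sum>p<k. \<Sum>q<l.
        8 * a (k - Suc p) * (8 * c (l - Suc q)) * B (p + q)
          - 8 * c (k - Suc p) * (8 * a (l - Suc q)) * B (p + q)
      - (8 * a (k - Suc p) * (8 * b (l - Suc q)) * C (p + q)
          - 8 * b (k - Suc p) * (8 * a (l - Suc q)) * C (p + q))
      + (8 * c (k - Suc p) * (8 * b (l - Suc q)) * A (p + q)
          - 8 * b (k - Suc p) * (8 * c (l - Suc q)) * A (p + q)))"
    unfolding G_def grad_poly_def left_diff_distrib sum.distrib sum_subtractf sum_poly_mult
      A_def B_def C_def moment_def ..
  also have "\<dots> = - 64 * (\<Sum>p<k. \<Sum>q<l. det3 a b c (k - Suc p) (l - Suc q) (Suc (p + q)))"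
    unfolding sum_distrib_left
    by (intro sum.cong) (simp_all add: det3_def a_def b_def c_def algebra_simps)
  also have "\<dots> = - 64 * moment_bracket A B C k l"
    unfolding moment_bracket_def sum_reindex_antidiagonal a_def b_def c_def ..
  finally show ?thesis .
qed

lemma pbracket_Fm_Fbar:
  assumes "1 \<le> m"
  shows "pbracket N mu (Fm N lam mu m) (Fbar j') z = 0"
proof -
  have "(\<Sum>i=1..3. pd_psi (Fm N lam mu m) z i j * (pd_phi (Fbar j') z i j / mu j)
      - pd_phi (Fm N lam mu m) z i j * (pd_psi (Fbar j') z i j / mu j)) = 0"
    if "j \<in> {1..N}" for j
  proof (cases "j = j'")
    case True
    have "(\<Sum>i=1..3. pd_psi (Fm N lam mu m) z i j * (pd_phi (Fbar j') z i j / mu j)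
        - pd_phi (Fm N lam mu m) z i j * (pd_psi (Fbar j') z i j / mu j))
      = (\<Sum>i=1..3. pd_psi (Fm N lam mu m) z i j * (snd z i j / mu j)
        - pd_phi (Fm N lam mu m) z i j * (fst z i j / mu j))"
      by (intro sum.cong) (simp_all add: pd_phi_Fbar pd_psi_Fbar True)
    also have "\<dots> = 0"
      unfolding pd_phi_Fm[OF assms that] pd_psi_Fm[OF assms that]
      by (rule dens_deriv_bracket_euler)
    finally show ?thesis .
  next
    case False
    then show ?thesis
      by (simp add: pd_phi_Fbar pd_psi_Fbar)
  qed
  then show ?thesis
    unfolding pbracket_def by (subst sum.swap) simp
qed

section \<open>Constancy along the spatial system\<close>

lemma sqrt2_qt: "sqrt 2 * qt N lam mu z = 2 * moment N lam mu densB z 0"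
  unfolding qt_def moment_densB by (simp add: mult.assoc[symmetric])

lemma sqrt2_rt: "sqrt 2 * rt N lam mu z = 2 * moment N lam mu densC z 0"
  unfolding rt_def moment_densC by (simp add: mult.assoc[symmetric])

lemma solution_has_real_derivative:
  fixes Z :: "real \<Rightarrow> point"
  assumes "is_solution N lam mu a b Z" and "x \<in> {a<..<b}" and "j \<in> {1..N}"
  defines "X \<equiv> Z x" and "l \<equiv> lam j"
  defines "B0 \<equiv> moment N lam mu densB X 0" and "C0 \<equiv> moment N lam mu densC X 0"
  shows "((\<lambda>y. fst (Z y) 1 j) has_real_derivative - 2 * l * fst X 1 j + 2 * B0 * fst X 2 j) (at x)"
    and "((\<lambda>y. fst (Z y) 2 j) has_real_derivative 2 * C0 * fst X 1 j + 2 * B0 * fst X 3 j) (at x)"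
    and "((\<lambda>y. fst (Z y) 3 j) has_real_derivative 2 * C0 * fst X 2 j + 2 * l * fst X 3 j) (at x)"
    and "((\<lambda>y. snd (Z y) 1 j) has_real_derivative 2 * l * snd X 1 j - 2 * C0 * snd X 2 j) (at x)"
    and "((\<lambda>y. snd (Z y) 2 j) has_real_derivative - 2 * B0 * snd X 1 j - 2 * C0 * snd X 3 j) (at x)"
    and "((\<lambda>y. snd (Z y) 3 j) has_real_derivative - 2 * B0 * snd X 2 j - 2 * l * snd X 3 j) (at x)"
proof -
  have "((\<lambda>y. fst (Z y) i j) has_real_derivative
          (\<Sum>k=1..3. Umat (qt N lam mu X) (rt N lam mu X) l i k * fst X k j)) (at x)"
    and "((\<lambda>y. snd (Z y) i j) has_real_derivative
          - (\<Sum>k=1..3. Umat (qt N lam mu X) (rt N lam mu X) l k i * snd X k j)) (at x)"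
    if "i \<in> {1..3}" for i
    using assms that unfolding is_solution_def by blast+
  note component = this[unfolded sum_1_to_3]
  note eqs = Umat_def sqrt2_qt sqrt2_rt B0_def C0_def algebra_simps
  show "((\<lambda>y. fst (Z y) 1 j) has_real_derivative - 2 * l * fst X 1 j + 2 * B0 * fst X 2 j) (at x)"
    using component(1)[of 1] by (rule DERIV_cong) (simp_all add: eqs)
  show "((\<lambda>y. fst (Z y) 2 j) has_real_derivative 2 * C0 * fst X 1 j + 2 * B0 * fst X 3 j) (at x)"
    using component(1)[of 2] by (rule DERIV_cong) (simp_all add: eqs)
  show "((\<lambda>y. fst (Z y) 3 j) has_real_derivative 2 * C0 * fst X 2 j + 2 * l * fst X 3 j) (at x)"
    using component(1)[of 3] by (rule DERIV_cong) (simp_all add: eqs)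
  show "((\<lambda>y. snd (Z y) 1 j) has_real_derivative 2 * l * snd X 1 j - 2 * C0 * snd X 2 j) (at x)"
    using component(2)[of 1] by (rule DERIV_cong) (simp_all add: eqs)
  show "((\<lambda>y. snd (Z y) 2 j) has_real_derivative - 2 * B0 * snd X 1 j - 2 * C0 * snd X 3 j) (at x)"
    using component(2)[of 2] by (rule DERIV_cong) (simp_all add: eqs)
  show "((\<lambda>y. snd (Z y) 3 j) has_real_derivative - 2 * B0 * snd X 2 j - 2 * l * snd X 3 j) (at x)"
    using component(2)[of 3] by (rule DERIV_cong) (simp_all add: eqs)
qed

lemma dens_has_real_derivative:
  fixes Z :: "real \<Rightarrow> point"
  assumes "is_solution N lam mu a b Z" and "x \<in> {a<..<b}" and "j \<in> {1..N}"
  defines "X \<equiv> Z x" and "l \<equiv> lam j"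
  defines "B0 \<equiv> moment N lam mu densB X 0" and "C0 \<equiv> moment N lam mu densC X 0"
  shows "((\<lambda>y. densA (Z y) j) has_real_derivative 2 * B0 * densC X j - 2 * C0 * densB X j) (at x)"
    and "((\<lambda>y. densB (Z y) j) has_real_derivative - 2 * l * densB X j - 2 * B0 * densA X j) (at x)"
    and "((\<lambda>y. densC (Z y) j) has_real_derivative 2 * l * densC X j + 2 * C0 * densA X j) (at x)"
  using solution_has_real_derivative[OF assms(1-3)]
  unfolding densA_def densB_def densC_def X_def l_def B0_def C0_def
  by (auto intro!: derivative_eq_intros simp: algebra_simps)

lemma moment_has_real_derivative:
  assumes "\<And>j. j \<in> {1..N} \<Longrightarrow> ((\<lambda>y. e (Z y) j) has_real_derivative d j) (at x)"
  shows "((\<lambda>y. moment N lam mu e (Z y) n) has_real_derivative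
    (\<Sum>j=1..N. lam j ^ n * (mu j * d j))) (at x)"
  unfolding moment_def by (intro DERIV_sum DERIV_cmult assms)

lemma moment_flow:
  fixes Z :: "real \<Rightarrow> point"
  assumes "is_solution N lam mu a b Z" and "x \<in> {a<..<b}"
  defines "A \<equiv> moment N lam mu densA (Z x)" and "B \<equiv> moment N lam mu densB (Z x)"
    and "C \<equiv> moment N lam mu densC (Z x)"
  shows "((\<lambda>y. moment N lam mu densA (Z y) n) has_real_derivative
      2 * B 0 * C n - 2 * C 0 * B n) (at x)"
    and "((\<lambda>y. moment N lam mu densB (Z y) n) has_real_derivative
      - 2 * B (Suc n) - 2 * B 0 * A n) (at x)"
    and "((\<lambda>y. moment N lam mu densC (Z y) n) has_real_derivative
      2 * C (Suc n) + 2 * C 0 * A n) (at x)"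
proof -
  note dens = dens_has_real_derivative[OF assms(1,2)]
  show "((\<lambda>y. moment N lam mu densA (Z y) n) has_real_derivative
      2 * B 0 * C n - 2 * C 0 * B n) (at x)"
    using moment_has_real_derivative[OF dens(1)] by (rule DERIV_cong)
      (simp_all add: A_def B_def C_def moment_def sum_distrib_left sum_subtractf algebra_simps)
  show "((\<lambda>y. moment N lam mu densB (Z y) n) has_real_derivative
      - 2 * B (Suc n) - 2 * B 0 * A n) (at x)"
    using moment_has_real_derivative[OF dens(2)] by (rule DERIV_cong)
      (simp_all add: A_def B_def C_def moment_def sum_distrib_left sum_subtractf algebra_simps)
  show "((\<lambda>y. moment N lam mu densC (Z y) n) has_real_derivative
      2 * C (Suc n) + 2 * C 0 * A n) (at x)"
    using moment_has_real_derivative[OF dens(3)] by (rule DERIV_cong)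
      (simp_all add: A_def B_def C_def moment_def sum_distrib_left sum.distrib algebra_simps)
qed

lemma Fm_has_real_derivative_0_on_solution:
  assumes "1 \<le> m" and "is_solution N lam mu a b Z" and "x \<in> {a<..<b}"
  shows "((\<lambda>y. Fm N lam mu m (Z y)) has_real_derivative 0) (at x)"
  using Fpoly_has_real_derivative[where A = "\<lambda>y. moment N lam mu densA (Z y)"
      and B = "\<lambda>y. moment N lam mu densB (Z y)" and C = "\<lambda>y. moment N lam mu densC (Z y)",
      OF moment_flow[OF assms(2,3)], of m]
  unfolding Fpoly_deriv_flow moment_bracket_eq_0 by (simp add: Fm_eq_Fpoly[OF assms(1)])

lemma Fm_constant_on_solution:
  assumes "1 \<le> m" and "is_solution N lam mu a b Z" and "x \<in> {a<..<b}" and "y \<in> {a<..<b}"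
  shows "Fm N lam mu m (Z x) = Fm N lam mu m (Z y)"
proof -
  obtain c where "\<forall>t\<in>{a<..<b}. Fm N lam mu m (Z t) = c"
    using has_field_derivative_zero_constant[of "{a<..<b}" "\<lambda>t. Fm N lam mu m (Z t)"]
      Fm_has_real_derivative_0_on_solution[OF assms(1,2)]
    by (auto intro: has_field_derivative_at_within)
  with assms(3,4) show ?thesis
    by simp
qed

theorem theorem3p2:
  fixes N :: nat and lam mu :: "nat \<Rightarrow> real"
  assumes "N \<ge> 1"
    and "inj_on lam {1..N}"
    and "\<forall>j \<in> {1..N}. mu j \<noteq> 0"
  shows "(\<forall>m \<ge> 1. \<forall>a b Z. is_solution N lam mu a b Z \<longrightarrow>
            (\<forall>x \<in> {a<..<b}. \<forall>y \<in> {a<..<b}. Fm N lam mu m (Z x) = Fm N lam mu m (Z y)))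
       \<and> (\<forall>k \<ge> 1. \<forall>l \<ge> 1. \<forall>z. pbracket N mu (Fm N lam mu k) (Fm N lam mu l) z = 0)
       \<and> (\<forall>m \<ge> 1. \<forall>j \<in> {1..N}. \<forall>z. pbracket N mu (Fm N lam mu m) (Fbar j) z = 0)"
proof (intro conjI allI impI ballI)
  fix m :: nat and a b :: real and Z x y
  assume "m \<ge> 1" "is_solution N lam mu a b Z" "x \<in> {a<..<b}" "y \<in> {a<..<b}"
  then show "Fm N lam mu m (Z x) = Fm N lam mu m (Z y)"
    by (rule Fm_constant_on_solution)
next
  fix k l :: nat and z
  assume "k \<ge> 1" "l \<ge> 1"
  then show "pbracket N mu (Fm N lam mu k) (Fm N lam mu l) z = 0"
    by (simp add: pbracket_Fm_Fm moment_bracket_eq_0)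
next
  fix m j :: nat and z
  assume "m \<ge> 1"
  then show "pbracket N mu (Fm N lam mu m) (Fbar j) z = 0"
    by (rule pbracket_Fm_Fbar)
qed

end
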